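(* Let $p\in(0,1)$ and let $(\lambda_n)_{n\ge1}$ be a sequence with $\lambda_1=1$ and $0\le\lambda_n\le\lambda_{n-1}$ for all $n>1$. Let $r_1,r_2,\dots$ be $\{0,1\}$-valued random variables with $\Pr(r_1=1)=p$ and, for every $n\ge2$, $\Pr(r_n=1\mid r_1,\dots,r_{n-1})=\lambda_n p+(1-\lambda_n)\bar p_{n-1}$, where $\bar p_m=\frac1m\sum_{i=1}^m r_i$. Then for every $n\ge1$, $\mathbb{E}[\bar p_n]=\mathbb{E}[r_n]=p$.
   Context: This is a model of the bandwagon effect: $r_n$ is the $n$-th binary rating of an item, $p$ the true preference, $\bar p_m$ the sample mean of the first $m$ ratings, and $\lambda_n$ the weight the $n$-th user puts on their own preference versus the current sample mean. *)

theory Defs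
  imports "HOL-Probability.Probability"
begin

definition pbar :: "(nat \<Rightarrow> 'a \<Rightarrow> real) \<Rightarrow> nat \<Rightarrow> 'a \<Rightarrow> real" where
  "pbar r m x = (\<Sum>i=1..m. r i x) / real m"

definition hist :: "'a measure \<Rightarrow> (nat \<Rightarrow> 'a \<Rightarrow> real) \<Rightarrow> nat \<Rightarrow> 'a measure" where
  "hist M r n = sigma (space M)
     {r i -` A \<inter> space M | i A. 1 \<le> i \<and> i < n \<and> A \<in> sets borel}"

end

theory Submission
  imports Defs
begin

text \<open>Taking expectations in the conditional-probability hypothesis (tower property) gives
  \<open>E r n = \<lambda> n * p + (1 - \<lambda> n) * E (pbar (n - 1))\<close>, and \<open>E (pbar m)\<close> is the average of
  \<open>E r 1, \<dots>, E r m\<close>. Hence if \<open>E r i = p\<close> for all \<open>i < n\<close>, also \<open>E r n = p\<close>, and strong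
  induction on \<open>n\<close> finishes the proof.\<close>

lemma average_eq_const:
  fixes e :: "nat \<Rightarrow> real"
  assumes "m \<ge> 1" and "\<And>i. 1 \<le> i \<Longrightarrow> i \<le> m \<Longrightarrow> e i = c"
  shows "(\<Sum>i=1..m. e i) / real m = c"
proof -
  have "(\<Sum>i=1..m. e i) = (\<Sum>i=1..m. c)"
    using assms(2) by (intro sum.cong) auto
  then show ?thesis
    using assms(1) by simp
qed

lemma eq_const_if_running_mean_recurrence:
  fixes e lam :: "nat \<Rightarrow> real"
  assumes base: "e 1 = p"
    and step: "\<And>n. n \<ge> 2 \<Longrightarrow> e n = lam n * p + (1 - lam n) * ((\<Sum>i=1..n-1. e i) / real (n - 1))"
    and "n \<ge> 1"
  shows "e n = p"
  using \<open>n \<ge> 1\<close>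
proof (induction n rule: less_induct)
  case (less n)
  show ?case
  proof (cases "n = 1")
    case True
    then show ?thesis using base by simp
  next
    case False
    with less.prems have "n \<ge> 2" by simp
    have "(\<Sum>i=1..n-1. e i) / real (n - 1) = p"
      using \<open>n \<ge> 2\<close> less.IH by (intro average_eq_const) auto
    then show ?thesis
      using step[OF \<open>n \<ge> 2\<close>] by (simp add: algebra_simps)
  qed
qed

lemma subalgebra_hist:
  assumes "\<And>i. r i \<in> borel_measurable M"
  shows "subalgebra M (hist M r n)"
proof -
  let ?G = "{r i -` A \<inter> space M | i A. 1 \<le> i \<and> i < n \<and> A \<in> sets borel}"
  have "?G \<subseteq> sets M"
    using assms by (auto intro: measurable_sets)
  then have "?G \<subseteq> Pow (space M)"
    using sets.sets_into_space by blast
  have "sigma_sets (space M) ?G \<subseteq> sets M"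
    using \<open>?G \<subseteq> sets M\<close> by (rule sets.sigma_sets_subset)
  with \<open>?G \<subseteq> Pow (space M)\<close> show ?thesis
    unfolding subalgebra_def hist_def by (simp add: space_measure_of sets_measure_of)
qed

lemma binary_eq_indicator:
  assumes "x \<in> S" and "f x \<in> {0, 1}"
  shows "f x = indicator {y \<in> S. f y = 1} x"
  using assms by (auto simp: indicator_def)

lemma (in finite_measure) integrable_binary:
  assumes "f \<in> borel_measurable M" and "\<And>x. x \<in> space M \<Longrightarrow> f x \<in> {0, 1 :: real}"
  shows "integrable M f"
proof (rule integrable_const_bound[where B = 1])
  show "AE x in M. norm (f x) \<le> 1"
    using assms(2) by (intro AE_I2) fastforce
qed (fact assms(1))

lemma (in finite_measure) integral_binary:
  assumes [measurable]: "f \<in> borel_measurable M"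
    and binary: "\<And>x. x \<in> space M \<Longrightarrow> f x \<in> {0, 1 :: real}"
  shows "(\<integral>x. f x \<partial>M) = measure M {x \<in> space M. f x = 1}"
proof -
  have "{x \<in> space M. f x = 1} \<in> sets M"
    by measurable
  moreover have "(\<integral>x. f x \<partial>M) = (\<integral>x. indicator {x \<in> space M. f x = 1} x \<partial>M)"
    using binary_eq_indicator[where S = "space M"] binary
    by (intro Bochner_Integration.integral_cong) auto
  ultimately show ?thesis
    by simp
qed

lemma (in prob_space) integral_binary_eq_integral_real_cond_exp:
  assumes "subalgebra M F"
    and [measurable]: "f \<in> borel_measurable M"
    and binary: "\<And>x. x \<in> space M \<Longrightarrow> f x \<in> {0, 1 :: real}"
  shows "(\<integral>x. f x \<partial>M) = (\<integral>x. real_cond_exp M F (indicator {x \<in> space M. f x = 1}) x \<partial>M)"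
proof -
  interpret finite_measure_subalgebra M F
    by unfold_locales (fact assms(1))
  have "{x \<in> space M. f x = 1} \<in> sets M"
    by measurable
  then have "integrable M (indicator {x \<in> space M. f x = 1} :: 'a \<Rightarrow> real)"
    by (intro integrable_binary) (auto simp: indicator_def)
  then show ?thesis
    using integral_binary[OF assms(2) binary] \<open>{x \<in> space M. f x = 1} \<in> sets M\<close>
    by (simp add: real_cond_exp_int(2))
qed

lemma integrable_pbar:
  assumes "\<And>i. integrable M (r i)"
  shows "integrable M (pbar r m)"
  unfolding pbar_def using assms by (intro integrable_divide Bochner_Integration.integrable_sum)

lemma integral_pbar:
  assumes "\<And>i. integrable M (r i)"
  shows "(\<integral>x. pbar r m x \<partial>M) = (\<Sum>i=1..m. (\<integral>x. r i x \<partial>M)) / real m"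
  unfolding pbar_def using assms by (simp add: integral_sum)

theorem theoremA1:
  fixes M :: "'a measure" and r :: "nat \<Rightarrow> 'a \<Rightarrow> real"
    and lam :: "nat \<Rightarrow> real" and p :: real
  assumes "prob_space M"
    and "0 < p" "p < 1"
    and "lam 1 = 1"
    and "\<And>n. n > 1 \<Longrightarrow> 0 \<le> lam n \<and> lam n \<le> lam (n - 1)"
    and "\<And>n. r n \<in> borel_measurable M"
    and "\<And>n x. x \<in> space M \<Longrightarrow> r n x \<in> {0, 1}"
    and "measure M {x \<in> space M. r 1 x = 1} = p"
    and "\<And>n. n \<ge> 2 \<Longrightarrow>
           AE x in M. real_cond_exp M (hist M r n) (indicator {x \<in> space M. r n x = 1}) x
                      = lam n * p + (1 - lam n) * pbar r (n - 1) x"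
  shows "\<forall>n\<ge>1. (\<integral>x. pbar r n x \<partial>M) = p \<and> (\<integral>x. r n x \<partial>M) = p"
proof -
  interpret prob_space M by fact
  have int_r: "integrable M (r i)" for i
    using assms(6,7) by (rule integrable_binary)
  have base: "(\<integral>x. r 1 x \<partial>M) = p"
    using integral_binary[OF assms(6,7)] assms(8) by simp
  have step: "(\<integral>x. r n x \<partial>M) = lam n * p + (1 - lam n) * (\<integral>x. pbar r (n - 1) x \<partial>M)"
    if "n \<ge> 2" for n
  proof -
    have "(\<integral>x. r n x \<partial>M)
        = (\<integral>x. real_cond_exp M (hist M r n) (indicator {x \<in> space M. r n x = 1}) x \<partial>M)"
      using subalgebra_hist[OF assms(6)] assms(6,7)
      by (rule integral_binary_eq_integral_real_cond_exp)
    also have "\<dots> = (\<integral>x. lam n * p + (1 - lam n) * pbar r (n - 1) x \<partial>M)"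
      using assms(9)[OF that] integrable_pbar[OF int_r]
      by (intro integral_cong_AE) (auto intro!: borel_measurable_integrable)
    also have "\<dots> = lam n * p + (1 - lam n) * (\<integral>x. pbar r (n - 1) x \<partial>M)"
      using integrable_pbar[OF int_r] by (simp add: prob_space)
    finally show ?thesis .
  qed
  have integral_r: "(\<integral>x. r n x \<partial>M) = p" if "n \<ge> 1" for n
    using base step[unfolded integral_pbar[OF int_r]] that
    by (rule eq_const_if_running_mean_recurrence[where e = "\<lambda>n. \<integral>x. r n x \<partial>M"])
  show ?thesis
  proof (intro allI impI conjI)
    fix n :: nat
    assume "n \<ge> 1"
    then show "(\<integral>x. pbar r n x \<partial>M) = p"
      unfolding integral_pbar[OF int_r] using integral_r by (rule average_eq_const)
    show "(\<integral>x. r n x \<partial>M) = p"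
      using integral_r \<open>n \<ge> 1\<close> .
  qed
qed

end
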